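(* Let $\lambda=(\lambda_1\ge\dots\ge\lambda_n)$ be a singular integral dominant weight (integers with $\lambda_j=\lambda_{j+1}$ for some $j$), and let $\lambda'=(\lambda'_1>\dots>\lambda'_n)$ be any regular integral dominant weight. Then the normal fan of $GT_{\lambda'}$ refines the normal fan of $GT_\lambda$.
   Context: For an integral dominant weight $\nu$, $GT_\nu\subset\mathbb R^{n(n+1)/2}$, with coordinates $A_{i,j}$ for $0\le i\le n-1$, $1\le j\le n-i$, is the polytope defined by $A_{0,j}=\nu_j$ and $A_{i,j}\ge A_{i+1,j}\ge A_{i,j+1}$ for $0\le i\le n-2$, $1\le j\le n-i-1$. The normal fan of a polytope $P$ is the collection of cones $\{c:\ \langle c,\cdot\rangle \text{ is maximized on } P \text{ along a given face}\}$ in the dual space; one fan refines another if each cone of the first is contained in a cone of the second. *)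

theory Defs
  imports Complex_Main
begin

definition GT_idx :: "nat \<Rightarrow> (nat \<times> nat) set" where
  "GT_idx n = {(i, j). i < n \<and> 1 \<le> j \<and> i + j \<le> n}"

text \<open>The ambient real vector space R^(n(n+1)/2) (and its dual), realised as functions
  on index pairs vanishing outside GT_idx n.\<close>
definition GT_space :: "nat \<Rightarrow> (nat \<times> nat \<Rightarrow> real) set" where
  "GT_space n = {x. \<forall>p. p \<notin> GT_idx n \<longrightarrow> x p = 0}"

definition pairing :: "nat \<Rightarrow> (nat \<times> nat \<Rightarrow> real) \<Rightarrow> (nat \<times> nat \<Rightarrow> real) \<Rightarrow> real" where
  "pairing n c x = (\<Sum>p\<in>GT_idx n. c p * x p)"

text \<open>Weights nu = (nu_1,...,nu_n) are integer sequences indexed from 1.\<close>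
definition dominant :: "nat \<Rightarrow> (nat \<Rightarrow> int) \<Rightarrow> bool" where
  "dominant n \<nu> \<longleftrightarrow> (\<forall>j. 1 \<le> j \<and> j < n \<longrightarrow> \<nu> j \<ge> \<nu> (j + 1))"

definition regular_dominant :: "nat \<Rightarrow> (nat \<Rightarrow> int) \<Rightarrow> bool" where
  "regular_dominant n \<nu> \<longleftrightarrow> (\<forall>j. 1 \<le> j \<and> j < n \<longrightarrow> \<nu> j > \<nu> (j + 1))"

definition GT :: "nat \<Rightarrow> (nat \<Rightarrow> int) \<Rightarrow> (nat \<times> nat \<Rightarrow> real) set" where
  "GT n \<nu> = {A \<in> GT_space n.
     (\<forall>j. 1 \<le> j \<and> j \<le> n \<longrightarrow> A (0, j) = real_of_int (\<nu> j)) \<and>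
     (\<forall>i j. i + 2 \<le> n \<and> 1 \<le> j \<and> i + j + 1 \<le> n \<longrightarrow>
          A (i, j) \<ge> A (i + 1, j) \<and> A (i + 1, j) \<ge> A (i, j + 1))}"

definition argmax_set :: "nat \<Rightarrow> (nat \<times> nat \<Rightarrow> real) set \<Rightarrow> (nat \<times> nat \<Rightarrow> real) \<Rightarrow> (nat \<times> nat \<Rightarrow> real) set" where
  "argmax_set n P c = {x \<in> P. \<forall>y\<in>P. pairing n c y \<le> pairing n c x}"

text \<open>Nonempty faces of a polytope P: the nonempty sets cut out by supporting hyperplanes,
  i.e. maximiser sets of linear functionals.\<close>
definition faces :: "nat \<Rightarrow> (nat \<times> nat \<Rightarrow> real) set \<Rightarrow> (nat \<times> nat \<Rightarrow> real) set set" where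
  "faces n P = {F. F \<noteq> {} \<and> (\<exists>c \<in> GT_space n. F = argmax_set n P c)}"

definition normal_cone :: "nat \<Rightarrow> (nat \<times> nat \<Rightarrow> real) set \<Rightarrow> (nat \<times> nat \<Rightarrow> real) set \<Rightarrow> (nat \<times> nat \<Rightarrow> real) set" where
  "normal_cone n P F = {c \<in> GT_space n. F \<subseteq> argmax_set n P c}"

definition normal_fan :: "nat \<Rightarrow> (nat \<times> nat \<Rightarrow> real) set \<Rightarrow> (nat \<times> nat \<Rightarrow> real) set set" where
  "normal_fan n P = normal_cone n P ` faces n P"

definition refines :: "'a set set \<Rightarrow> 'a set set \<Rightarrow> bool" where
  "refines \<Sigma>1 \<Sigma>2 \<longleftrightarrow> (\<forall>C\<in>\<Sigma>1. \<exists>D\<in>\<Sigma>2. C \<subseteq> D)"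

end

theory Submission
  imports Defs
begin

text \<open>Pick any point x' of a given face of GT(lam'). Since lam' is strictly decreasing, there
  is a monotone f : R -> R with f(lam'_k) = lam_k; applying f entrywise maps x' to a pattern of
  GT(lam) satisfying with equality every inequality tight at x'. The inequalities tight at x'
  therefore cut out a face F of GT(lam), and a functional maximised at x' on GT(lam') is maximised
  on all of F: for x in F and y in GT(lam), x' + e(y - x) stays in GT(lam') for small e > 0.\<close>

text \<open>A pair (p, q) stands for the defining inequality A q \<le> A p of the patterns.\<close>

definition GT_ineqs :: "nat \<Rightarrow> ((nat \<times> nat) \<times> (nat \<times> nat)) set" where
  "GT_ineqs n = (\<Union>(i, j)\<in>{(i, j). i + 2 \<le> n \<and> 1 \<le> j \<and> i + j + 1 \<le> n}.
     {((i, j), (i + 1, j)), ((i + 1, j), (i, j + 1))})"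

definition tight_ineqs :: "nat \<Rightarrow> (nat \<times> nat \<Rightarrow> real) \<Rightarrow> ((nat \<times> nat) \<times> (nat \<times> nat)) set" where
  "tight_ineqs n x = {(p, q) \<in> GT_ineqs n. x p = x q}"

lemma finite_GT_idx: "finite (GT_idx n)"
  by (rule finite_subset[of _ "{..n} \<times> {..n}"]) (auto simp: GT_idx_def)

lemma finite_GT_ineqs: "finite (GT_ineqs n)"
  by (rule finite_subset[of _ "({..n} \<times> {..n}) \<times> ({..n} \<times> {..n})"]) (auto simp: GT_ineqs_def)

lemma GT_ineqs_idx: "(p, q) \<in> GT_ineqs n \<Longrightarrow> p \<in> GT_idx n \<and> q \<in> GT_idx n"
  by (auto simp: GT_ineqs_def GT_idx_def)

lemma mem_GT_iff:
  "A \<in> GT n \<nu> \<longleftrightarrow> A \<in> GT_space n \<and> (\<forall>j. 1 \<le> j \<and> j \<le> n \<longrightarrow> A (0, j) = real_of_int (\<nu> j))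
     \<and> (\<forall>(p, q)\<in>GT_ineqs n. A q \<le> A p)"
  unfolding GT_def GT_ineqs_def by auto

lemma pairing_affine:
  "pairing n c (\<lambda>p. x p + e * (y p - z p)) = pairing n c x + e * (pairing n c y - pairing n c z)"
  unfolding pairing_def by (simp add: algebra_simps sum.distrib sum_subtractf sum_distrib_left)

lemma pairing_sum: "pairing n (\<lambda>r. \<Sum>s\<in>S. c s r) x = (\<Sum>s\<in>S. pairing n (c s) x)"
  unfolding pairing_def by (simp add: sum_distrib_right) (rule sum.swap)

lemma pairing_delta:
  assumes "q \<in> GT_idx n"
  shows "pairing n (\<lambda>r. if r = q then 1 else 0) x = x q"
proof -
  have "pairing n (\<lambda>r. if r = q then 1 else 0) x = (\<Sum>r\<in>GT_idx n. if q = r then x r else 0)"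
    unfolding pairing_def by (rule sum.cong) auto
  also have "\<dots> = x q" using finite_GT_idx[of n] assms by (simp add: sum.delta)
  finally show ?thesis .
qed

lemma pairing_delta_diff:
  assumes "p \<in> GT_idx n" "q \<in> GT_idx n"
  shows "pairing n (\<lambda>r. (if r = q then 1 else 0) - (if r = p then 1 else 0)) x = x q - x p"
  using pairing_delta[OF assms(1)] pairing_delta[OF assms(2)]
  by (simp add: pairing_def left_diff_distrib sum_subtractf)

lemma dominant_antimono:
  assumes "dominant n \<nu>" "1 \<le> j" "j \<le> k" "k \<le> n"
  shows "\<nu> k \<le> \<nu> j"
  using assms(3,4)
proof (induction k rule: dec_induct)
  case (step m)
  then have "\<nu> (m + 1) \<le> \<nu> m" using assms(1,2) unfolding dominant_def by simp
  then show ?case using step by simp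
qed simp

lemma regular_dominant_strict_antimono:
  assumes "regular_dominant n \<nu>" "1 \<le> j" "j < k" "k \<le> n"
  shows "\<nu> k < \<nu> j"
proof -
  have "Suc j \<le> k" using assms(3) by simp
  then show ?thesis using assms(4)
  proof (induction k rule: dec_induct)
    case base
    then show ?case using assms(1,2) unfolding regular_dominant_def by simp
  next
    case (step m)
    then have "\<nu> (m + 1) < \<nu> m" using assms(1,2) unfolding regular_dominant_def by simp
    then show ?case using step by simp
  qed
qed

lemma monotone_interpolation:
  fixes a b :: "'i \<Rightarrow> real"
  assumes "finite J" "J \<noteq> {}" and ab: "\<And>j k. j \<in> J \<Longrightarrow> k \<in> J \<Longrightarrow> a j \<le> a k \<Longrightarrow> b j \<le> b k"
  shows "\<exists>f. mono f \<and> (\<forall>k\<in>J. f (a k) = b k)"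
proof -
  define f where "f t = Max (insert (Min (b ` J)) (b ` {j \<in> J. a j \<le> t}))" for t
  have "mono f"
    unfolding f_def by (rule monoI, rule Max_mono) (use assms(1) in auto)
  moreover have "f (a k) = b k" if "k \<in> J" for k
    unfolding f_def
    by (rule Max_eqI) (use assms that ab in \<open>auto intro: Min_le\<close>)
  ultimately show ?thesis by blast
qed

lemma weights_monotone_interpolation:
  assumes "dominant n lam" "regular_dominant n lam'"
  shows "\<exists>f. mono f \<and> (\<forall>k. 1 \<le> k \<and> k \<le> n \<longrightarrow> f (real_of_int (lam' k)) = real_of_int (lam k))"
proof (cases "n = 0")
  case False
  have "real_of_int (lam j) \<le> real_of_int (lam k)"
    if "j \<in> {1..n}" "k \<in> {1..n}" "real_of_int (lam' j) \<le> real_of_int (lam' k)" for j k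
  proof -
    have "k \<le> j"
      using that regular_dominant_strict_antimono[OF assms(2), of j k] by force
    then show ?thesis using that dominant_antimono[OF assms(1), of k j] by simp
  qed
  then show ?thesis
    using monotone_interpolation[of "{1..n}" "\<lambda>k. real_of_int (lam' k)" "\<lambda>k. real_of_int (lam k)"] False
    by auto
qed (auto intro: monoI)

lemma GT_mono_image:
  assumes "x' \<in> GT n lam'" "mono f"
    and f_top: "\<And>k. 1 \<le> k \<Longrightarrow> k \<le> n \<Longrightarrow> f (real_of_int (lam' k)) = real_of_int (lam k)"
  defines "x \<equiv> \<lambda>p. if p \<in> GT_idx n then f (x' p) else 0"
  shows "x \<in> GT n lam" and "tight_ineqs n x' \<subseteq> tight_ineqs n x"
proof -
  have "(0, k) \<in> GT_idx n" if "1 \<le> k" "k \<le> n" for k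
    using that by (auto simp: GT_idx_def)
  then show "x \<in> GT n lam"
    using assms(1) f_top GT_ineqs_idx monoD[OF \<open>mono f\<close>]
    unfolding mem_GT_iff x_def GT_space_def by fastforce
  show "tight_ineqs n x' \<subseteq> tight_ineqs n x"
    using GT_ineqs_idx unfolding tight_ineqs_def x_def by fastforce
qed

lemma face_of_tight_ineqs:
  assumes T: "T \<subseteq> GT_ineqs n" and x0: "x0 \<in> GT n \<nu>" "T \<subseteq> tight_ineqs n x0"
  shows "{x \<in> GT n \<nu>. T \<subseteq> tight_ineqs n x} \<in> faces n (GT n \<nu>)"
proof -
  define c :: "nat \<times> nat \<Rightarrow> real"
    where "c r = (\<Sum>(p, q)\<in>T. (if r = q then 1 else 0) - (if r = p then 1 else 0))" for r
  define slack where "slack x = (\<Sum>(p, q)\<in>T. x p - x q)" for x :: "nat \<times> nat \<Rightarrow> real"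
  have finT: "finite T" using finite_subset[OF T finite_GT_ineqs] .
  have c_pairing: "pairing n c x = - slack x" for x
  proof -
    have "pairing n c x = (\<Sum>s\<in>T. pairing n (\<lambda>r. case s of (p, q) \<Rightarrow>
        (if r = q then 1 else 0) - (if r = p then 1 else 0)) x)"
      unfolding c_def by (rule pairing_sum)
    also have "\<dots> = (\<Sum>(p, q)\<in>T. x q - x p)"
      using T GT_ineqs_idx by (intro sum.cong) (auto simp: pairing_delta_diff)
    finally show ?thesis unfolding slack_def by (simp add: case_prod_unfold sum_negf[symmetric])
  qed
  have slack_nonneg: "\<And>s. s \<in> T \<Longrightarrow> 0 \<le> (case s of (p, q) \<Rightarrow> x p - x q)" if "x \<in> GT n \<nu>" for x
    using that T unfolding mem_GT_iff by fastforce
  have slack_zero_iff: "slack x = 0 \<longleftrightarrow> T \<subseteq> tight_ineqs n x" if "x \<in> GT n \<nu>" for x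
    using sum_nonneg_eq_0_iff[OF finT slack_nonneg[OF that]] T
    unfolding slack_def tight_ineqs_def by auto
  have "slack x0 = 0" using slack_zero_iff x0 by blast
  then have "argmax_set n (GT n \<nu>) c = {x \<in> GT n \<nu>. slack x = 0}"
    using x0(1) slack_nonneg sum_nonneg[OF slack_nonneg]
    unfolding argmax_set_def c_pairing slack_def by (auto intro!: antisym)
  also have "\<dots> = {x \<in> GT n \<nu>. T \<subseteq> tight_ineqs n x}" using slack_zero_iff by blast
  finally have argmax: "argmax_set n (GT n \<nu>) c = {x \<in> GT n \<nu>. T \<subseteq> tight_ineqs n x}" .
  have "c \<in> GT_space n"
    using T GT_ineqs_idx unfolding GT_space_def c_def by (fastforce intro: sum.neutral)
  moreover have "x0 \<in> argmax_set n (GT n \<nu>) c" unfolding argmax using x0 by blast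
  ultimately show ?thesis unfolding faces_def argmax[symmetric] by blast
qed

lemma eventually_nonneg_perturbation:
  fixes u d :: real
  assumes "0 \<le> u" "u = 0 \<Longrightarrow> 0 \<le> d"
  shows "eventually (\<lambda>e. 0 \<le> u + e * d) (at_right 0)"
proof (cases "u = 0")
  case True
  then show ?thesis
    using assms(2) eventually_at_right_less[of 0] by (auto elim: eventually_mono)
next
  case False
  have "((\<lambda>e. u + e * d) \<longlongrightarrow> u + 0 * d) (at_right 0)" by (intro tendsto_intros)
  then have "eventually (\<lambda>e. 0 < u + e * d) (at_right 0)"
    using False assms(1) by (intro order_tendstoD(1)) auto
  then show ?thesis by (rule eventually_mono) simp
qed

lemma argmax_GT_transfer:
  assumes x': "x' \<in> GT n lam'" "x' \<in> argmax_set n (GT n lam') c"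
    and x: "x \<in> GT n lam" "tight_ineqs n x' \<subseteq> tight_ineqs n x"
  shows "x \<in> argmax_set n (GT n lam) c"
  unfolding argmax_set_def
proof (intro CollectI conjI ballI x(1))
  fix y assume y: "y \<in> GT n lam"
  define z where "z e = (\<lambda>p. x' p + e * (y p - x p))" for e :: real
  have "\<forall>\<^sub>F e in at_right 0. \<forall>(p, q)\<in>GT_ineqs n. z e q \<le> z e p"
  proof (rule eventually_ball_finite[OF finite_GT_ineqs], clarify)
    fix p q assume pq: "(p, q) \<in> GT_ineqs n"
    have "\<forall>\<^sub>F e in at_right 0. 0 \<le> (x' p - x' q) + e * ((y p - y q) - (x p - x q))"
    proof (rule eventually_nonneg_perturbation)
      show "0 \<le> x' p - x' q" using x'(1) pq unfolding mem_GT_iff by auto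
      assume "x' p - x' q = 0"
      then have "x p = x q" using x(2) pq unfolding tight_ineqs_def by auto
      then show "0 \<le> (y p - y q) - (x p - x q)" using y pq unfolding mem_GT_iff by auto
    qed
    then show "\<forall>\<^sub>F e in at_right 0. z e q \<le> z e p"
      by (rule eventually_mono) (simp add: z_def algebra_simps)
  qed
  then obtain e where e: "e > 0" "\<forall>(p, q)\<in>GT_ineqs n. z e q \<le> z e p"
    using eventually_happens[OF eventually_conj[OF eventually_at_right_less]] by fastforce
  have "z e \<in> GT n lam'"
    using x'(1) x(1) y e(2) unfolding mem_GT_iff GT_space_def z_def by auto
  then have "pairing n c (z e) \<le> pairing n c x'" using x'(2) unfolding argmax_set_def by auto
  then have "e * (pairing n c y - pairing n c x) \<le> 0" unfolding z_def pairing_affine by simp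
  then show "pairing n c y \<le> pairing n c x" using e(1) by (simp add: mult_le_0_iff)
qed

theorem mainTheorem8:
  fixes n :: nat and lam lam' :: "nat \<Rightarrow> int"
  assumes "dominant n lam"
    and "\<exists>j. 1 \<le> j \<and> j < n \<and> lam j = lam (j + 1)"
    and "regular_dominant n lam'"
  shows "refines (normal_fan n (GT n lam')) (normal_fan n (GT n lam))"
  unfolding refines_def normal_fan_def
proof
  fix C assume "C \<in> normal_cone n (GT n lam') ` faces n (GT n lam')"
  then obtain F' x' where F': "F' \<in> faces n (GT n lam')" and C: "C = normal_cone n (GT n lam') F'"
    and "x' \<in> F'" unfolding faces_def by auto
  then have x': "x' \<in> GT n lam'" and C_sub: "\<And>c. c \<in> C \<Longrightarrow> x' \<in> argmax_set n (GT n lam') c"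
    unfolding faces_def argmax_set_def normal_cone_def by auto
  obtain f where f: "mono f" "\<And>k. 1 \<le> k \<Longrightarrow> k \<le> n \<Longrightarrow> f (real_of_int (lam' k)) = real_of_int (lam k)"
    using weights_monotone_interpolation[OF assms(1,3)] by blast
  note x0 = GT_mono_image[OF x' f]
  define F where "F = {x \<in> GT n lam. tight_ineqs n x' \<subseteq> tight_ineqs n x}"
  have "F \<in> faces n (GT n lam)"
    unfolding F_def by (rule face_of_tight_ineqs[OF _ x0]) (auto simp: tight_ineqs_def)
  moreover have "C \<subseteq> normal_cone n (GT n lam) F"
    using C_sub argmax_GT_transfer[OF x'] C unfolding F_def normal_cone_def by auto
  ultimately show "\<exists>D\<in>normal_cone n (GT n lam) ` faces n (GT n lam). C \<subseteq> D" by blast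
qed

end
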